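(* Let $f$ be a continuous real-valued function defined on an interval $I$. Then $f$ is convex if and only if \[ \frac{1}{|J|}\int_J f(x)\,\mathrm{d}x\geq\frac{1}{|K|}\int_K f(x)\,\mathrm{d}x \] whenever $K\subset J$ are two compact subintervals of $I$ of positive length having the same midpoint. Here $|J|$, $|K|$ denote the lengths of the intervals. *)

theory Defs
  imports "HOL-Analysis.Analysis"
begin

end

theory Submission
  imports Defs
begin

text \<open>
  The mean of \<open>f\<close> over \<open>[c - r, c + r]\<close> equals \<open>1/4 \<integral>\<^sub>-\<^sub>1\<^sup>1 (f (c + r x) + f (c - r x)) dx\<close>,
  and for convex \<open>f\<close> the integrand is nondecreasing in \<open>r\<close>.
  Conversely, shrinking the inner interval to its midpoint turns monotone means into the
  sub-mean-value property \<open>f c \<le>\<close> (mean over \<open>[c - r, c + r]\<close>). It survives subtracting a chord,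
  and it forbids a positive maximum on \<open>[x, y]\<close> when the endpoints are \<open>\<le> 0\<close>: the leftmost
  maximum point would exceed its mean over the largest symmetric interval around it.
  Hence \<open>f\<close> lies below all its chords.
\<close>

lemma has_integral_reflected_sum_rescaled:
  fixes f :: "real \<Rightarrow> real"
  assumes f: "(f has_integral i) {c - t..c + t}" and "0 < t"
  shows "((\<lambda>x. f (c + t * x) + f (c - t * x)) has_integral 2 * i / t) {-1..1}"
proof -
  have "((\<lambda>x. f (t * x + c)) has_integral i / t) {-1..1}"
    using has_integral_affinity'[of f i "c - t" "c + t" t c] f \<open>0 < t\<close> by (simp add: divide_inverse mult.commute)
  then have plus: "((\<lambda>x. f (c + t * x)) has_integral i / t) {-1..1}"
    by (simp add: add.commute)
  then have "((\<lambda>x. f (c + t * - x)) has_integral i / t) {-1..- (-1)}"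
    by (subst has_integral_reflect_real) simp
  then have minus: "((\<lambda>x. f (c - t * x)) has_integral i / t) {-1..1}"
    by simp
  show ?thesis
    using has_integral_add[OF plus minus] by simp
qed

lemma symmetric_average_affine:
  fixes \<alpha> \<beta> :: real
  assumes "0 < r"
  shows "integral {c - r..c + r} (\<lambda>u. \<alpha> + \<beta> * u) / (2 * r) = \<alpha> + \<beta> * c"
proof -
  let ?i = "integral {c - r..c + r} (\<lambda>u. \<alpha> + \<beta> * u)"
  have "(\<lambda>u. \<alpha> + \<beta> * u) integrable_on {c - r..c + r}"
    by (intro integrable_continuous_interval continuous_intros)
  then have "((\<lambda>x. \<alpha> + \<beta> * (c + r * x) + (\<alpha> + \<beta> * (c - r * x))) has_integral 2 * ?i / r) {-1..1}"
    using assms by (intro has_integral_reflected_sum_rescaled) auto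
  moreover have "((\<lambda>x. \<alpha> + \<beta> * (c + r * x) + (\<alpha> + \<beta> * (c - r * x))) has_integral 4 * (\<alpha> + \<beta> * c)) {-1..1}"
    using has_integral_const_real[of "2 * (\<alpha> + \<beta> * c)" "-1" 1] by (simp add: algebra_simps)
  ultimately have "2 * ?i / r = 4 * (\<alpha> + \<beta> * c)"
    by (rule has_integral_unique)
  then show ?thesis
    using assms by (simp add: field_simps)
qed

lemma symmetric_average_tendsto:
  fixes f :: "real \<Rightarrow> real"
  assumes "continuous_on {c - r..c + r} f" and "0 < r"
  shows "((\<lambda>s. integral {c - s..c + s} f / (2 * s)) \<longlongrightarrow> f c) (at_right 0)"
proof (rule tendstoI)
  fix \<epsilon> :: real assume "0 < \<epsilon>"
  moreover have "c \<in> {c - r..c + r}"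
    using assms(2) by simp
  ultimately obtain d where "0 < d"
    and d: "\<And>u. u \<in> {c - r..c + r} \<Longrightarrow> dist u c < d \<Longrightarrow> dist (f u) (f c) < \<epsilon> / 2"
    using assms(1) half_gt_zero unfolding continuous_on_iff by metis
  have "dist (integral {c - s..c + s} f / (2 * s)) (f c) < \<epsilon>" if s: "s \<in> {0<..<min d r}" for s
  proof -
    have sub: "{c - s..c + s} \<subseteq> {c - r..c + r}" using s by auto
    have "norm (integral {c - s..c + s} (\<lambda>u. f u - f c)) \<le> \<epsilon> / 2 * ((c + s) - (c - s))"
    proof (rule integral_bound)
      show "continuous_on {c - s..c + s} (\<lambda>u. f u - f c)"
        by (intro continuous_intros continuous_on_subset[OF assms(1) sub])
      show "norm (f u - f c) \<le> \<epsilon> / 2" if "u \<in> {c - s..c + s}" for u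
        using d[of u] that sub s by (auto simp: dist_real_def abs_less_iff)
    qed (use s in auto)
    moreover have "integral {c - s..c + s} (\<lambda>u. f u - f c) = integral {c - s..c + s} f - 2 * s * f c"
      using s by (simp add: integral_diff integrable_continuous_interval continuous_on_subset[OF assms(1) sub])
    moreover have "0 < \<epsilon> * s" using s \<open>0 < \<epsilon>\<close> by simp
    ultimately show ?thesis
      using s by (simp add: dist_real_def field_simps abs_le_iff abs_less_iff)
  qed
  then show "\<forall>\<^sub>F s in at_right 0. dist (integral {c - s..c + s} f / (2 * s)) (f c) < \<epsilon>"
    using eventually_at_right_real[of 0 "min d r"] \<open>0 < d\<close> assms(2) eventually_mono by force
qed

lemma integral_less_bound_continuous:
  fixes g :: "real \<Rightarrow> real"
  assumes "a < b" and "continuous_on {a..b} g" and "\<And>u. u \<in> {a..b} \<Longrightarrow> g u \<le> M"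
    and "v \<in> {a..b}" and "g v < M"
  shows "integral {a..b} g < M * (b - a)"
proof -
  let ?h = "\<lambda>u. M - g u"
  have h: "continuous_on {a..b} ?h" "\<And>u. u \<in> {a..b} \<Longrightarrow> 0 \<le> ?h u"
    by (intro continuous_intros assms(2)) (simp add: assms(3))
  have "integral {a..b} ?h = M * (b - a) - integral {a..b} g"
    using assms(1) by (simp add: integral_diff integrable_continuous_interval assms(2))
  moreover have "integral {a..b} ?h \<noteq> 0"
    using integral_cbox_eq_0_iff[of a b ?h] h assms(1,4,5) by auto
  moreover have "0 \<le> integral {a..b} ?h"
    using h by (intro integral_nonneg integrable_continuous_interval) auto
  ultimately show ?thesis by linarith
qed

lemma convex_on_reflected_sum_mono:
  fixes f :: "real \<Rightarrow> real"
  assumes "convex_on I f" and "c - a \<in> I" and "c + a \<in> I" and "\<bar>b\<bar> \<le> \<bar>a\<bar>"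
  shows "f (c + b) + f (c - b) \<le> f (c + a) + f (c - a)"
proof (cases "a = 0")
  case True
  then show ?thesis using assms(4) by simp
next
  case False
  define u where "u = (1 + b / a) / 2"
  have "\<bar>b / a\<bar> \<le> 1"
    using assms(4) False by (simp add: divide_le_eq_1)
  then have u: "0 \<le> u" "u \<le> 1"
    by (auto simp: u_def abs_le_iff simp del: abs_divide)
  have "c + b = (1 - u) *\<^sub>R (c - a) + u *\<^sub>R (c + a)" "c - b = (1 - u) *\<^sub>R (c + a) + u *\<^sub>R (c - a)"
    using False by (simp_all add: u_def field_simps)
  then have "f (c + b) \<le> (1 - u) * f (c - a) + u * f (c + a)"
    and "f (c - b) \<le> (1 - u) * f (c + a) + u * f (c - a)"
    using convex_onD[OF assms(1) u] assms(2,3) by metis+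
  then show ?thesis by (simp add: algebra_simps)
qed

lemma convex_on_imp_symmetric_average_mono:
  fixes f :: "real \<Rightarrow> real"
  assumes "convex_on I f" and "{c - r..c + r} \<subseteq> I" and "f integrable_on {c - r..c + r}"
    and "0 < s" and "s \<le> r"
  shows "integral {c - s..c + s} f / (2 * s) \<le> integral {c - r..c + r} f / (2 * r)"
proof -
  have "f integrable_on {c - s..c + s}"
    using assms(3) by (rule integrable_subinterval_real) (use assms(5) in auto)
  then have "((\<lambda>x. f (c + s * x) + f (c - s * x)) has_integral 2 * integral {c - s..c + s} f / s) {-1..1}"
    using \<open>0 < s\<close> by (intro has_integral_reflected_sum_rescaled) auto
  moreover have "((\<lambda>x. f (c + r * x) + f (c - r * x)) has_integral 2 * integral {c - r..c + r} f / r) {-1..1}"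
    using assms(3-5) by (intro has_integral_reflected_sum_rescaled) auto
  moreover have "f (c + s * x) + f (c - s * x) \<le> f (c + r * x) + f (c - r * x)" if "x \<in> {-1..1}" for x
  proof (rule convex_on_reflected_sum_mono[OF assms(1)])
    have "\<bar>r * x\<bar> \<le> r"
      using that assms(4,5) by (simp add: abs_mult mult_left_le_one_le abs_le_iff)
    then show "c - r * x \<in> I" "c + r * x \<in> I"
      using assms(2) by (auto simp: abs_le_iff)
    show "\<bar>s * x\<bar> \<le> \<bar>r * x\<bar>"
      using assms(4,5) by (simp add: abs_mult mult_right_mono)
  qed
  ultimately have "2 * integral {c - s..c + s} f / s \<le> 2 * integral {c - r..c + r} f / r"
    by (rule has_integral_le)
  then show ?thesis by simp
qed

definition sub_mean_value_on :: "real set \<Rightarrow> (real \<Rightarrow> real) \<Rightarrow> bool" where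
  "sub_mean_value_on I f \<longleftrightarrow>
     (\<forall>c r. 0 < r \<and> {c - r..c + r} \<subseteq> I \<longrightarrow> f c \<le> integral {c - r..c + r} f / (2 * r))"

lemma symmetric_average_mono_imp_sub_mean_value_on:
  fixes f :: "real \<Rightarrow> real"
  assumes "continuous_on I f"
    and mono: "\<And>c r s. 0 < s \<Longrightarrow> s \<le> r \<Longrightarrow> {c - r..c + r} \<subseteq> I \<Longrightarrow>
       integral {c - s..c + s} f / (2 * s) \<le> integral {c - r..c + r} f / (2 * r)"
  shows "sub_mean_value_on I f"
  unfolding sub_mean_value_on_def
proof (intro allI impI, elim conjE)
  fix c r :: real assume "0 < r" and sub: "{c - r..c + r} \<subseteq> I"
  have "((\<lambda>s. integral {c - s..c + s} f / (2 * s)) \<longlongrightarrow> f c) (at_right 0)"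
    using continuous_on_subset[OF assms(1) sub] \<open>0 < r\<close> by (rule symmetric_average_tendsto)
  moreover have "\<forall>\<^sub>F s in at_right 0. integral {c - s..c + s} f / (2 * s) \<le> integral {c - r..c + r} f / (2 * r)"
    using eventually_at_right_real[OF \<open>0 < r\<close>] by eventually_elim (use mono sub in auto)
  ultimately show "f c \<le> integral {c - r..c + r} f / (2 * r)"
    by (rule tendsto_upperbound) simp
qed

lemma sub_mean_value_on_diff_affine:
  fixes f :: "real \<Rightarrow> real"
  assumes "sub_mean_value_on I f" and "continuous_on I f"
  shows "sub_mean_value_on I (\<lambda>u. f u - (\<alpha> + \<beta> * u))"
  unfolding sub_mean_value_on_def
proof (intro allI impI, elim conjE)
  fix c r assume "0 < r" and sub: "{c - r..c + r} \<subseteq> I"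
  have "integral {c - r..c + r} (\<lambda>u. f u - (\<alpha> + \<beta> * u))
      = integral {c - r..c + r} f - integral {c - r..c + r} (\<lambda>u. \<alpha> + \<beta> * u)"
    by (intro integral_diff integrable_continuous_interval continuous_intros
        continuous_on_subset[OF assms(2) sub])
  moreover have "f c \<le> integral {c - r..c + r} f / (2 * r)"
    using assms(1) \<open>0 < r\<close> sub unfolding sub_mean_value_on_def by blast
  ultimately show "f c - (\<alpha> + \<beta> * c) \<le> integral {c - r..c + r} (\<lambda>u. f u - (\<alpha> + \<beta> * u)) / (2 * r)"
    using symmetric_average_affine[OF \<open>0 < r\<close>, where \<alpha> = \<alpha> and \<beta> = \<beta> and c = c] by (simp add: diff_divide_distrib)
qed

lemma sub_mean_value_on_maximum_principle:
  fixes g :: "real \<Rightarrow> real"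
  assumes "sub_mean_value_on {a..b} g" and "continuous_on {a..b} g"
    and "g a \<le> 0" and "g b \<le> 0" and "u \<in> {a..b}"
  shows "g u \<le> 0"
proof (rule ccontr)
  assume "\<not> g u \<le> 0"
  obtain m where m: "m \<in> {a..b}" "\<And>v. v \<in> {a..b} \<Longrightarrow> g v \<le> g m"
    using continuous_attains_sup[OF compact_Icc _ assms(2)] assms(5) by fastforce
  define M where "M = g m"
  have "0 < M" using m \<open>\<not> g u \<le> 0\<close> assms(5) unfolding M_def by force
  define S where "S = {v \<in> {a..b}. g v = M}"
  have "compact S"
    unfolding S_def compact_eq_bounded_closed by (intro conjI bounded_subset[OF bounded_closed_interval]
        continuous_closed_preimage_constant[OF assms(2)]) auto
  moreover have "m \<in> S" using m by (simp add: S_def M_def)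
  ultimately obtain x where x: "x \<in> S" "\<And>v. v \<in> S \<Longrightarrow> x \<le> v"
    using continuous_attains_inf[of S "\<lambda>v. v"] continuous_on_id by blast
  have "a < x" "x < b"
    using x(1) assms(3,4) \<open>0 < M\<close> by (auto simp: S_def order.order_iff_strict)
  define \<delta> where "\<delta> = min (x - a) (b - x)"
  have J: "0 < \<delta>" "{x - \<delta>..x + \<delta>} \<subseteq> {a..b}"
    using \<open>a < x\<close> \<open>x < b\<close> by (auto simp: \<delta>_def)
  have "g (x - \<delta>) < M"
    using m(2)[of "x - \<delta>"] x(2)[of "x - \<delta>"] J
    by (force simp: S_def M_def)
  then have "integral {x - \<delta>..x + \<delta>} g < M * ((x + \<delta>) - (x - \<delta>))"
    using J m(2)
    by (intro integral_less_bound_continuous[where v = "x - \<delta>"] continuous_on_subset[OF assms(2)])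
       (auto simp: M_def)
  moreover have "M \<le> integral {x - \<delta>..x + \<delta>} g / (2 * \<delta>)"
    using assms(1) J x(1)
    unfolding sub_mean_value_on_def S_def by auto
  ultimately show False
    using \<open>0 < \<delta>\<close> by (simp add: field_simps)
qed

lemma sub_mean_value_on_imp_convex_on:
  fixes f :: "real \<Rightarrow> real"
  assumes "is_interval I" and "continuous_on I f" and "sub_mean_value_on I f"
  shows "convex_on I f"
proof (rule convex_on_linorderI)
  show "convex I" using assms(1) by (rule is_interval_convex)
  fix t x y :: real assume t: "0 < t" "t < 1" and "x \<in> I" "y \<in> I" "x < y"
  have sub: "{x..y} \<subseteq> I"
    using assms(1) \<open>x \<in> I\<close> \<open>y \<in> I\<close> unfolding is_interval_1 by (meson atLeastAtMost_iff subsetI)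
  define \<beta> where "\<beta> = (f y - f x) / (y - x)"
  define \<alpha> where "\<alpha> = f x - \<beta> * x"
  define g where "g u = f u - (\<alpha> + \<beta> * u)" for u
  define z where "z = (1 - t) * x + t * y"
  have slope: "\<beta> * (y - x) = f y - f x"
    using \<open>x < y\<close> by (simp add: \<beta>_def)
  have chord: "\<alpha> + \<beta> * z = (1 - t) * f x + t * f y"
  proof -
    have "\<alpha> + \<beta> * z = f x + t * (\<beta> * (y - x))"
      by (simp add: \<alpha>_def z_def algebra_simps)
    also have "\<dots> = (1 - t) * f x + t * f y"
      unfolding slope by (simp add: algebra_simps)
    finally show ?thesis .
  qed
  have "sub_mean_value_on {x..y} g"
    using sub_mean_value_on_diff_affine[OF assms(3,2)] sub
    unfolding g_def sub_mean_value_on_def by (meson order_trans)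
  moreover have "continuous_on {x..y} g"
    unfolding g_def by (intro continuous_intros continuous_on_subset[OF assms(2) sub])
  moreover have "g x \<le> 0" "g y \<le> 0"
    using slope by (simp_all add: g_def \<alpha>_def algebra_simps)
  moreover have "z \<in> {x..y}"
  proof -
    have "0 \<le> t * (y - x)" "t * (y - x) \<le> y - x"
      using t \<open>x < y\<close> by (simp_all add: mult_left_le_one_le)
    moreover have "z = x + t * (y - x)"
      by (simp add: z_def algebra_simps)
    ultimately show ?thesis by simp
  qed
  ultimately have "g z \<le> 0"
    by (rule sub_mean_value_on_maximum_principle)
  then show "f ((1 - t) *\<^sub>R x + t *\<^sub>R y) \<le> (1 - t) * f x + t * f y"
    using chord unfolding g_def z_def by simp
qed

theorem theorem3:
  fixes f :: "real \<Rightarrow> real" and I :: "real set"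
  assumes "is_interval I" and "continuous_on I f"
  shows "convex_on I f \<longleftrightarrow>
    (\<forall>c r s. 0 < s \<and> s \<le> r \<and> {c - r..c + r} \<subseteq> I \<longrightarrow>
       integral {c - s..c + s} f / (2 * s) \<le> integral {c - r..c + r} f / (2 * r))"
proof
  assume "convex_on I f"
  then show "\<forall>c r s. 0 < s \<and> s \<le> r \<and> {c - r..c + r} \<subseteq> I \<longrightarrow>
      integral {c - s..c + s} f / (2 * s) \<le> integral {c - r..c + r} f / (2 * r)"
    by (blast intro: convex_on_imp_symmetric_average_mono integrable_continuous_interval
        continuous_on_subset[OF assms(2)])
next
  assume "\<forall>c r s. 0 < s \<and> s \<le> r \<and> {c - r..c + r} \<subseteq> I \<longrightarrow>
      integral {c - s..c + s} f / (2 * s) \<le> integral {c - r..c + r} f / (2 * r)"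
  then have "sub_mean_value_on I f"
    using symmetric_average_mono_imp_sub_mean_value_on[OF assms(2)] by blast
  then show "convex_on I f"
    using sub_mean_value_on_imp_convex_on[OF assms] by blast
qed

end
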